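(* Assume (A1)–(A3) below. For any $\omega\in\Delta^{L-1}$ and any two positive definite matrices $W_1,W_2$ with $\lambda(W_1)=\lambda(W_2)=\omega$, $$V(W_1;\Omega_\omega)=V(W_2;\Omega_\omega)=\omega'D^{-1}\Omega_\omega D^{-1}\omega,$$ where $D=\mathrm{diag}(\gamma_1,\dots,\gamma_L)$ and $\Omega_\omega=\Omega(\beta^*(\omega))$.
   Context: Observe i.i.d. $(Y_i,D_i,\mathbf Z_i)$ with $Y_i\in\mathbb R$, $D_i\in\{0,1\}$, $\mathbf Z_i=(Z_{1i},\dots,Z_{Li})'\in\{0,1\}^L$, $L\ge2$; potential outcomes $Y_i(0),Y_i(1)$, compliance type $D_i(\cdot):\{0,1\}^L\to\{0,1\}$, $D_i=D_i(\mathbf Z_i)$, $Y_i=D_iY_i(1)+(1-D_i)Y_i(0)$. $p_\ell=P(Z_{\ell i}=1)$, $\pi_\ell,\rho_\ell$ the differences of $\mathbb E[D_i\mid Z_{\ell i}=z]$, $\mathbb E[Y_i\mid Z_{\ell i}=z]$ between $z=1$ and $0$, $\mathrm{Wald}_\ell=\rho_\ell/\pi_\ell$, $\gamma_\ell=\mathrm{Cov}(D_i,Z_{\ell i})$, $\boldsymbol\gamma=(\gamma_\ell)_\ell$, $\Sigma_Z=\mathrm{Var}(\mathbf Z_i)$. $g_i(\beta)$ is the vector with entries $(Y_i-\beta D_i)(Z_{\ell i}-p_\ell)$, $\Omega(\beta)=\mathbb E[g_i(\beta)g_i(\beta)']$. $\lambda_\ell(W)=\gamma_\ell[W\boldsymbol\gamma]_\ell/(\boldsymbol\gamma'W\boldsymbol\gamma)$;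 $\Delta^{L-1}$ is the probability simplex in $\mathbb R^L$; $\beta^*(\omega)=\sum_\ell\omega_\ell\mathrm{Wald}_\ell$. The sandwich variance is $V(W;\Omega)=\boldsymbol\gamma'W\Omega W\boldsymbol\gamma/(\boldsymbol\gamma'W\boldsymbol\gamma)^2$. Assumptions: (A1) $(Y_i(0),Y_i(1),D_i(\cdot))$ independent of $\mathbf Z_i$. (A2) $D_i(z)$ nondecreasing in each coordinate for every $i$. (A3) $p_\ell>0$, $\pi_\ell>0$ for all $\ell$; $\Sigma_Z$ positive definite. *)

theory Defs
  imports "HOL-Probability.Probability"
begin

text \<open>Population quantities for one draw (Y,D,Z) of the i.i.d. sample, on a probability
space M. Instruments are indexed by a finite type 'L (L = CARD('L)).\<close>

definition cmean :: "'a measure \<Rightarrow> ('a \<Rightarrow> real) \<Rightarrow> 'a set \<Rightarrow> real" where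
  "cmean M X A = (\<integral>x. X x * indicator A x \<partial>M) / measure M A"

definition pZ :: "'a measure \<Rightarrow> ('a \<Rightarrow> 'L \<Rightarrow> bool) \<Rightarrow> 'L \<Rightarrow> real" where
  "pZ M Z l = measure M {x \<in> space M. Z x l}"

definition piZ :: "'a measure \<Rightarrow> ('a \<Rightarrow> real) \<Rightarrow> ('a \<Rightarrow> 'L \<Rightarrow> bool) \<Rightarrow> 'L \<Rightarrow> real" where
  "piZ M X Z l = cmean M X {x \<in> space M. Z x l} - cmean M X {x \<in> space M. \<not> Z x l}"

definition wald :: "'a measure \<Rightarrow> ('a \<Rightarrow> real) \<Rightarrow> ('a \<Rightarrow> real) \<Rightarrow> ('a \<Rightarrow> 'L \<Rightarrow> bool) \<Rightarrow> 'L \<Rightarrow> real" where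
  "wald M Y D Z l = piZ M Y Z l / piZ M D Z l"

definition betastar :: "'a measure \<Rightarrow> ('a \<Rightarrow> real) \<Rightarrow> ('a \<Rightarrow> real) \<Rightarrow> ('a \<Rightarrow> 'L::finite \<Rightarrow> bool)
    \<Rightarrow> real^'L \<Rightarrow> real" where
  "betastar M Y D Z w = (\<Sum>l\<in>UNIV. w $ l * wald M Y D Z l)"

definition gammaZ :: "'a measure \<Rightarrow> ('a \<Rightarrow> real) \<Rightarrow> ('a \<Rightarrow> 'L::finite \<Rightarrow> bool) \<Rightarrow> real^'L" where
  "gammaZ M D Z = (\<chi> l. (\<integral>x. D x * of_bool (Z x l) \<partial>M) - (\<integral>x. D x \<partial>M) * pZ M Z l)"

definition SigmaZ :: "'a measure \<Rightarrow> ('a \<Rightarrow> 'L::finite \<Rightarrow> bool) \<Rightarrow> real^'L^'L" where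
  "SigmaZ M Z = (\<chi> l k. (\<integral>x. of_bool (Z x l) * of_bool (Z x k) \<partial>M) - pZ M Z l * pZ M Z k)"

definition gmom :: "'a measure \<Rightarrow> ('a \<Rightarrow> real) \<Rightarrow> ('a \<Rightarrow> real) \<Rightarrow> ('a \<Rightarrow> 'L::finite \<Rightarrow> bool)
    \<Rightarrow> real \<Rightarrow> 'a \<Rightarrow> real^'L" where
  "gmom M Y D Z b x = (\<chi> l. (Y x - b * D x) * (of_bool (Z x l) - pZ M Z l))"

definition OmegaM :: "'a measure \<Rightarrow> ('a \<Rightarrow> real) \<Rightarrow> ('a \<Rightarrow> real) \<Rightarrow> ('a \<Rightarrow> 'L::finite \<Rightarrow> bool)
    \<Rightarrow> real \<Rightarrow> real^'L^'L" where
  "OmegaM M Y D Z b = (\<chi> l k. \<integral>x. gmom M Y D Z b x $ l * gmom M Y D Z b x $ k \<partial>M)"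

definition pos_def_mat :: "real^'n^'n \<Rightarrow> bool" where
  "pos_def_mat A \<longleftrightarrow> transpose A = A \<and> (\<forall>x. x \<noteq> 0 \<longrightarrow> x \<bullet> (A *v x) > 0)"

definition lambdaW :: "real^'L \<Rightarrow> real^'L^'L \<Rightarrow> real^'L" where
  "lambdaW g W = (\<chi> l. g $ l * (W *v g) $ l / (g \<bullet> (W *v g)))"

definition sandwichV :: "real^'L \<Rightarrow> real^'L^'L \<Rightarrow> real^'L^'L \<Rightarrow> real" where
  "sandwichV g W Om = (g \<bullet> ((W ** Om ** W) *v g)) / (g \<bullet> (W *v g))\<^sup>2"

definition prob_simplex :: "(real^'L::finite) set" where
  "prob_simplex = {w. (\<forall>l. w $ l \<ge> 0) \<and> (\<Sum>l\<in>UNIV. w $ l) = 1}"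

definition diag_mat :: "real^'L \<Rightarrow> real^'L^'L" where
  "diag_mat g = (\<chi> i j. if i = j then g $ i else 0)"

end

theory Submission
  imports Defs
begin

text \<open>By definition \<open>\<lambda>(W) = D W \<gamma> / (\<gamma>' W \<gamma>)\<close> with \<open>D = diag \<gamma>\<close>, so for symmetric \<open>W\<close> the
vector \<open>W \<gamma>\<close> equals \<open>(\<gamma>' W \<gamma>) D\<^sup>-\<^sup>1 \<lambda>(W)\<close>. Writing the sandwich numerator as
\<open>(W \<gamma>)' \<Omega> (W \<gamma>)\<close>, the factor \<open>(\<gamma>' W \<gamma>)\<^sup>2\<close> cancels and \<open>V(W; \<Omega>) = \<lambda>' D\<^sup>-\<^sup>1 \<Omega> D\<^sup>-\<^sup>1 \<lambda>\<close>:
the variance depends on \<open>W\<close> only through \<open>\<lambda>(W)\<close>. The matrix \<open>D\<close> is invertible because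
\<open>\<gamma>\<^sub>l = p\<^sub>l (1 - p\<^sub>l) \<pi>\<^sub>l\<close>, where \<open>\<pi>\<^sub>l > 0\<close> and \<open>p\<^sub>l (1 - p\<^sub>l)\<close> is the \<open>l\<close>-th diagonal entry of
the positive definite \<open>\<Sigma>\<^sub>Z\<close>.\<close>

lemma matrix_inv_eqI:
  fixes A B :: "'a::semiring_1^'n^'n"
  assumes AB: "A ** B = mat 1" and BA: "B ** A = mat 1"
  shows "matrix_inv A = B"
proof -
  have "\<exists>A'. A ** A' = mat 1 \<and> A' ** A = mat 1" using AB BA by blast
  then have inv: "A ** matrix_inv A = mat 1 \<and> matrix_inv A ** A = mat 1"
    unfolding matrix_inv_def by (rule someI_ex)
  have "matrix_inv A = matrix_inv A ** (A ** B)" using AB by simp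
  also have "\<dots> = B" using inv by (simp add: matrix_mul_assoc)
  finally show ?thesis .
qed

lemma matrix_inv_diag_mat:
  fixes g :: "real^'n"
  assumes "\<And>l. g $ l \<noteq> 0"
  shows "matrix_inv (diag_mat g) = diag_mat (\<chi> l. inverse (g $ l))"
  by (rule matrix_inv_eqI)
    (use assms in \<open>auto simp: diag_mat_def matrix_matrix_mult_def mat_def vec_eq_iff
       if_distrib[of "\<lambda>x. x * _"] cong: if_cong\<close>)

lemma diag_mat_mult_vec: "diag_mat g *v v = (\<chi> l. g $ l * v $ l)"
  by (auto simp: vec_eq_iff diag_mat_def matrix_vector_mult_def if_distrib[of "\<lambda>x. x * _"]
      cong: if_cong)

lemma transpose_diag_mat [simp]: "transpose (diag_mat g) = diag_mat g"
  by (auto simp: diag_mat_def transpose_def vec_eq_iff)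

lemma inner_symmetric_sandwich:
  fixes A B :: "real^'n^'n"
  assumes "transpose A = A"
  shows "x \<bullet> ((A ** B ** A) *v x) = (A *v x) \<bullet> (B *v (A *v x))"
proof -
  have "x \<bullet> ((A ** B ** A) *v x) = x \<bullet> (A *v (B *v (A *v x)))"
    by (simp add: matrix_vector_mul_assoc matrix_mul_assoc)
  also have "\<dots> = (x v* A) \<bullet> (B *v (A *v x))"
    by (rule dot_lmul_matrix[symmetric])
  also have "x v* A = A *v x"
    using vector_transpose_matrix[of x A] assms by simp
  finally show ?thesis .
qed

lemma pos_def_mat_diag_pos:
  assumes "pos_def_mat A"
  shows "A $ l $ l > 0"
proof -
  have "axis l (1::real) \<bullet> (A *v axis l 1) > 0"
    using assms unfolding pos_def_mat_def by (simp add: axis_eq_0_iff)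
  then show ?thesis
    by (simp add: matrix_vector_mult_def inner_vec_def axis_def
        if_distrib[of "\<lambda>x. x * _"] if_distrib[of "\<lambda>x. _ * x"] cong: if_cong)
qed

lemma matrix_vector_mult_eq_scaleR_lambdaW:
  assumes nondeg: "g \<bullet> (W *v g) \<noteq> 0" and g: "\<And>l. g $ l \<noteq> 0"
  shows "W *v g = (g \<bullet> (W *v g)) *\<^sub>R (matrix_inv (diag_mat g) *v lambdaW g W)"
  using nondeg g by (auto simp: vec_eq_iff lambdaW_def matrix_inv_diag_mat diag_mat_mult_vec field_simps)

theorem sandwichV_eq_lambdaW_form:
  fixes g :: "real^'n" and W Om :: "real^'n^'n"
  assumes W: "transpose W = W" and nondeg: "g \<bullet> (W *v g) \<noteq> 0" and g: "\<And>l. g $ l \<noteq> 0"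
  defines "Dinv \<equiv> matrix_inv (diag_mat g)"
  shows "sandwichV g W Om = lambdaW g W \<bullet> ((Dinv ** Om ** Dinv) *v lambdaW g W)"
proof -
  define u where "u = Dinv *v lambdaW g W"
  define c where "c = g \<bullet> (W *v g)"
  have Wg: "W *v g = c *\<^sub>R u"
    using matrix_vector_mult_eq_scaleR_lambdaW[OF nondeg g] by (simp add: c_def u_def Dinv_def)
  have "g \<bullet> ((W ** Om ** W) *v g) = (W *v g) \<bullet> (Om *v (W *v g))"
    by (rule inner_symmetric_sandwich[OF W])
  also have "\<dots> = c\<^sup>2 * (u \<bullet> (Om *v u))"
    by (simp add: Wg matrix_vector_mult_scaleR power2_eq_square)
  finally have "g \<bullet> ((W ** Om ** W) *v g) = (g \<bullet> (W *v g))\<^sup>2 * (u \<bullet> (Om *v u))"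
    unfolding c_def .
  then have "sandwichV g W Om = u \<bullet> (Om *v u)"
    using nondeg by (simp add: sandwichV_def)
  also have "\<dots> = lambdaW g W \<bullet> ((Dinv ** Om ** Dinv) *v lambdaW g W)"
    unfolding u_def Dinv_def
    by (rule inner_symmetric_sandwich[symmetric]) (simp add: matrix_inv_diag_mat g)
  finally show ?thesis .
qed

corollary sandwichV_pos_def_eq_lambdaW_form:
  fixes g :: "real^'n" and W Om :: "real^'n^'n"
  assumes W: "pos_def_mat W" and g: "\<And>l. g $ l \<noteq> 0"
  shows "sandwichV g W Om = lambdaW g W \<bullet>
           ((matrix_inv (diag_mat g) ** Om ** matrix_inv (diag_mat g)) *v lambdaW g W)"
proof (rule sandwichV_eq_lambdaW_form)
  show "transpose W = W" using W by (simp add: pos_def_mat_def)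
  have "g \<noteq> 0" using g by (metis zero_index)
  then show "g \<bullet> (W *v g) \<noteq> 0"
    using W unfolding pos_def_mat_def by (metis less_irrefl)
qed (fact g)

lemma integrable_of_bool_pred_at:
  fixes P :: "'a \<Rightarrow> 'b::countable \<Rightarrow> bool"
  assumes "finite_measure M"
    and P: "P \<in> M \<rightarrow>\<^sub>M count_space UNIV" and Z: "Z \<in> M \<rightarrow>\<^sub>M count_space UNIV"
  shows "integrable M (\<lambda>x. of_bool (P x (Z x)) :: real)"
proof -
  have "(\<lambda>x. (\<lambda>z x. of_bool (P x z) :: real) (Z x) x) \<in> borel_measurable M"
  proof (rule measurable_compose_countable'[OF _ Z])
    show "(\<lambda>x. of_bool (P x z) :: real) \<in> borel_measurable M" for z
      using measurable_compose[OF P, of "\<lambda>f. of_bool (f z)" borel] by simp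
  qed simp
  then show ?thesis
    using \<open>finite_measure M\<close> by (intro finite_measure.integrable_const_bound[where B=1]) auto
qed

lemma cmean_mult_measure:
  assumes "finite_measure M" and X: "integrable M X" and A: "A \<in> sets M"
  shows "cmean M X A * measure M A = (\<integral>x. X x * indicator A x \<partial>M)"
proof (cases "measure M A = 0")
  case True
  then have "A \<in> null_sets M"
    using A finite_measure.emeasure_eq_measure[OF assms(1)] by (simp add: null_sets_def)
  then have "(\<integral>x. X x * indicator A x \<partial>M) = 0"
    by (intro integral_eq_zero_AE) (auto dest: AE_not_in)
  then show ?thesis by (simp add: cmean_def True)
qed (simp add: cmean_def)

lemma gammaZ_eq_piZ:
  assumes "prob_space M" and D: "integrable M D" and Zl: "{x \<in> space M. Z x l} \<in> sets M"
  shows "gammaZ M D Z $ l = pZ M Z l * (1 - pZ M Z l) * piZ M D Z l"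
proof -
  interpret prob_space M by fact
  define A where "A = {x \<in> space M. Z x l}"
  define B where "B = {x \<in> space M. \<not> Z x l}"
  have A_sets: "A \<in> sets M" and B_eq: "B = space M - A"
    using Zl by (auto simp: A_def B_def)
  then have B_sets: "B \<in> sets M" by auto
  define p where "p = prob A"
  have prob_B: "prob B = 1 - p"
    unfolding B_eq p_def using A_sets by (rule prob_compl)
  define a b where "a = cmean M D A" and "b = cmean M D B"
  have int_A: "(\<integral>x. D x * indicator A x \<partial>M) = a * p"
    using cmean_mult_measure[OF _ D A_sets] by (simp add: a_def p_def finite_measure_axioms)
  have int_B: "(\<integral>x. D x * indicator B x \<partial>M) = b * (1 - p)"
    using cmean_mult_measure[OF _ D B_sets] prob_B by (simp add: b_def finite_measure_axioms)
  have "(\<integral>x. D x \<partial>M) = (\<integral>x. D x * indicator A x + D x * indicator B x \<partial>M)"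
    by (rule Bochner_Integration.integral_cong) (auto simp: A_def B_def indicator_def)
  also have "\<dots> = a * p + b * (1 - p)"
    using D A_sets B_sets by (simp add: integrable_real_mult_indicator int_A int_B)
  finally have int_D: "(\<integral>x. D x \<partial>M) = a * p + b * (1 - p)" .
  have "(\<integral>x. D x * of_bool (Z x l) \<partial>M) = (\<integral>x. D x * indicator A x \<partial>M)"
    by (rule Bochner_Integration.integral_cong) (auto simp: A_def indicator_def)
  moreover have "pZ M Z l = p"
    by (simp add: pZ_def p_def A_def)
  ultimately have "gammaZ M D Z $ l = a * p - (a * p + b * (1 - p)) * p"
    by (simp add: gammaZ_def int_A int_D)
  also have "\<dots> = p * (1 - p) * (a - b)"
    by (simp add: algebra_simps)
  finally show ?thesis
    by (simp add: piZ_def pZ_def a_def b_def p_def A_def B_def)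
qed

lemma SigmaZ_diag:
  assumes "prob_space M" and Zl: "{x \<in> space M. Z x l} \<in> sets M"
  shows "SigmaZ M Z $ l $ l = pZ M Z l * (1 - pZ M Z l)"
proof -
  interpret prob_space M by fact
  have "(\<integral>x. of_bool (Z x l) * of_bool (Z x l) \<partial>M) = (\<integral>x. (indicator {x \<in> space M. Z x l} x :: real) \<partial>M)"
    by (rule Bochner_Integration.integral_cong) (auto simp: indicator_def)
  also have "\<dots> = pZ M Z l"
    using Zl by (simp add: pZ_def)
  finally show ?thesis
    by (simp add: SigmaZ_def algebra_simps power2_eq_square)
qed

theorem proposition7:
  fixes M :: "'a measure"
    and Y0 Y1 :: "'a \<Rightarrow> real"
    and Dc :: "'a \<Rightarrow> ('L::finite \<Rightarrow> bool) \<Rightarrow> bool"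
    and Z :: "'a \<Rightarrow> 'L \<Rightarrow> bool"
    and Y D :: "'a \<Rightarrow> real"
    and w :: "real^'L"
    and W1 W2 :: "real^'L^'L"
  assumes "prob_space M"
    and "CARD('L) \<ge> 2"
    and D_def: "\<And>x. D x = of_bool (Dc x (Z x))"
    and Y_def: "\<And>x. Y x = D x * Y1 x + (1 - D x) * Y0 x"
    and meas_U: "(\<lambda>x. (Y0 x, Y1 x, Dc x)) \<in> M \<rightarrow>\<^sub>M (borel \<Otimes>\<^sub>M borel \<Otimes>\<^sub>M count_space UNIV)"
    and meas_Z: "Z \<in> M \<rightarrow>\<^sub>M count_space UNIV"
    and A1: "\<And>A B. A \<in> sets (borel \<Otimes>\<^sub>M borel \<Otimes>\<^sub>M count_space UNIV) \<Longrightarrow>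
               measure M {x \<in> space M. (Y0 x, Y1 x, Dc x) \<in> A \<and> Z x \<in> B}
               = measure M {x \<in> space M. (Y0 x, Y1 x, Dc x) \<in> A} * measure M {x \<in> space M. Z x \<in> B}"
    and A2: "\<And>x z z'. (\<forall>l. z l \<longrightarrow> z' l) \<Longrightarrow> Dc x z \<Longrightarrow> Dc x z'"
    and A3p: "\<And>l. pZ M Z l > 0"
    and A3pi: "\<And>l. piZ M D Z l > 0"
    and A3S: "pos_def_mat (SigmaZ M Z)"
    and w_simplex: "w \<in> prob_simplex"
    and W1: "pos_def_mat W1" and W2: "pos_def_mat W2"
    and lam1: "lambdaW (gammaZ M D Z) W1 = w"
    and lam2: "lambdaW (gammaZ M D Z) W2 = w"
  shows "sandwichV (gammaZ M D Z) W1 (OmegaM M Y D Z (betastar M Y D Z w))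
           = sandwichV (gammaZ M D Z) W2 (OmegaM M Y D Z (betastar M Y D Z w))
       \<and> sandwichV (gammaZ M D Z) W2 (OmegaM M Y D Z (betastar M Y D Z w))
           = w \<bullet> ((matrix_inv (diag_mat (gammaZ M D Z)) ** OmegaM M Y D Z (betastar M Y D Z w)
                     ** matrix_inv (diag_mat (gammaZ M D Z))) *v w)"
proof -
  interpret prob_space M by fact
  let ?g = "gammaZ M D Z"
  have Z_events: "{x \<in> space M. Z x l} \<in> sets M" for l
    using measurable_sets[OF meas_Z, of "{f. f l}"] by (simp add: vimage_def Int_def conj_commute)
  have "Dc \<in> M \<rightarrow>\<^sub>M count_space UNIV"
    using measurable_compose[OF measurable_compose[OF meas_U measurable_snd] measurable_snd] by simp
  then have "integrable M D"
    unfolding D_def using meas_Z by (simp add: integrable_of_bool_pred_at finite_measure_axioms)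
  have "?g $ l = SigmaZ M Z $ l $ l * piZ M D Z l" for l
    using \<open>prob_space M\<close> \<open>integrable M D\<close> Z_events by (simp add: gammaZ_eq_piZ SigmaZ_diag)
  then have "?g $ l > 0" for l
    using pos_def_mat_diag_pos[OF A3S] A3pi by simp
  then have "?g $ l \<noteq> 0" for l
    using less_imp_neq[symmetric] by blast
  then show ?thesis
    using sandwichV_pos_def_eq_lambdaW_form[OF W1] sandwichV_pos_def_eq_lambdaW_form[OF W2] lam1 lam2
    by simp
qed

end
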